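(* Let $K$ be a number field and let $\alpha=p/q$ be a positive rational number with $\gcd(p,q)=1$ which is not an integer and is not of the form $1/n$ for an integer $n$. Let $F\in K((x))$ be a Laurent series such that there exist $d\ge 0$ and polynomials $P_0,\dots,P_d\in K[x]$ with $P_d\ne0$ and $\sum_{i=0}^d P_i(x)F(x^{\alpha^i})=0$. Then there is a Laurent series $G\in K((x))$ with $F(x)=G(x^{q^d})$.
   Context: For a Laurent series $F=\sum_i f_ix^i$ and $\gamma>0$, $F(x^\gamma)=\sum_i f_i x^{\gamma i}$, regarded as a Hahn series (formal series with well-ordered support in $\mathbb{R}$); the equation holds in the field of such Hahn series over $K$. *)

theory Defs
  imports "HOL-Computational_Algebra.Computational_Algebra"
begin

text \<open>A number field, realised (as every number field can be) as a subfield of the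
complex numbers which is finite-dimensional as a vector space over the rationals.\<close>
definition number_field :: "complex set \<Rightarrow> bool" where
  "number_field K \<longleftrightarrow>
     0 \<in> K \<and> 1 \<in> K \<and>
     (\<forall>x\<in>K. \<forall>y\<in>K. x + y \<in> K \<and> x - y \<in> K \<and> x * y \<in> K) \<and>
     (\<forall>x\<in>K. x \<noteq> 0 \<longrightarrow> inverse x \<in> K) \<and>
     (\<exists>B. finite B \<and> B \<subseteq> K \<and>
          (\<forall>x\<in>K. \<exists>c :: complex \<Rightarrow> rat. x = (\<Sum>b\<in>B. of_rat (c b) * b)))"

text \<open>Hahn series whose support lies in the rationals, represented by their
coefficient function (exponent \<mapsto> coefficient).\<close>
type_synonym 'a qhahn = "rat \<Rightarrow> 'a"

text \<open>F(x^\<gamma>) for a Laurent series F and \<gamma> > 0: coefficient of x^r is f_{r/\<gamma>}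
if r/\<gamma> is an integer, and 0 otherwise.\<close>
definition fls_subst_pow :: "'a::zero fls \<Rightarrow> rat \<Rightarrow> 'a qhahn" where
  "fls_subst_pow F \<gamma> = (\<lambda>r. if r / \<gamma> \<in> \<int> then fls_nth F \<lfloor>r / \<gamma>\<rfloor> else 0)"

definition poly_hahn_mult :: "'a::comm_semiring_1 poly \<Rightarrow> 'a qhahn \<Rightarrow> 'a qhahn" where
  "poly_hahn_mult P H = (\<lambda>r. \<Sum>j\<le>degree P. coeff P j * H (r - of_nat j))"

end

theory Submission
  imports Defs
begin

(* Suppose some nonzero coefficient f_n of F has q^d not dividing n. Take the largest m < d such
   that q^m divides every exponent in the support of F, the least exponent n0 in the support not
   divisible by q^(m+1), and the lowest exponent j0 of P_d. With alpha = p/q, the monomial x^r,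
   r = alpha^d n0 + j0, occurs only in P_d(x) F(x^(alpha^d)), with coefficient
   coeff P_d j0 * f_n0 <> 0: a term x^j x^(alpha^i n) at r means
   p^i q^(d-i) n + q^d j = p^d n0 + q^d j0; reducing modulo q^(m+1) and using gcd(p,q) = 1 forces
   i = d, and then minimality of n0 and j0 forces (n, j) = (n0, j0).
   So F is supported on q^d Z and F(x) = G(x^(q^d)), where G has coefficients among those of F. *)

lemma fls_in_range_compose_power:
  fixes F :: "'a::zero fls"
  assumes "k > 0" and "\<And>n. fls_nth F n \<noteq> 0 \<Longrightarrow> int k dvd n"
  shows "F \<in> range (\<lambda>G. fls_compose_power G k)"
proof -
  let ?g = "\<lambda>n. fls_nth F (n * int k)"
  have "{n::nat. ?g (- int n) \<noteq> 0} \<subseteq> {..nat (- fls_subdegree F)}"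
  proof
    fix n assume "n \<in> {n::nat. ?g (- int n) \<noteq> 0}"
    then have "fls_subdegree F \<le> - int n * int k"
      by (intro fls_subdegree_leI) simp
    also have "\<dots> \<le> - int n"
      using \<open>k > 0\<close> by (simp add: mult_le_cancel_left1)
    finally show "n \<in> {..nat (- fls_subdegree F)}" by simp
  qed
  then have "\<forall>\<^sub>\<infinity> n::nat. ?g (- int n) = 0"
    by (simp add: eventually_cofinite finite_subset)
  then have "fls_nth (Abs_fls ?g) = ?g"
    by (simp add: Abs_fls_inverse)
  then have "F = fls_compose_power (Abs_fls ?g) k"
    using assms by (intro fls_eqI) (auto simp: fls_nth_compose_power)
  then show ?thesis by blast
qed

lemma ex_least_power_not_dvd:
  fixes b :: "'a::comm_monoid_mult"
  assumes "\<exists>n\<in>S. \<not> b ^ d dvd n"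
  shows "\<exists>m<d. (\<forall>n\<in>S. b ^ m dvd n) \<and> (\<exists>n\<in>S. \<not> b ^ Suc m dvd n)"
  using assms
proof (induction d)
  case 0
  then show ?case by simp
next
  case (Suc d)
  show ?case
  proof (cases "\<exists>n\<in>S. \<not> b ^ d dvd n")
    case True
    with Suc.IH show ?thesis using less_SucI by blast
  next
    case False
    with Suc.prems show ?thesis by blast
  qed
qed

lemma fls_ex_least_nonzero_index:
  assumes "fls_nth F n \<noteq> 0" and "Q n"
  shows "\<exists>n0. fls_nth F n0 \<noteq> 0 \<and> Q n0 \<and> (\<forall>n. fls_nth F n \<noteq> 0 \<longrightarrow> Q n \<longrightarrow> n0 \<le> n)"
proof -
  let ?s = "fls_subdegree F"
  obtain n0 where n0: "fls_nth F n0 \<noteq> 0" "Q n0"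
    and least: "\<And>n. fls_nth F n \<noteq> 0 \<and> Q n \<Longrightarrow> nat (n0 - ?s) \<le> nat (n - ?s)"
    using ex_has_least_nat[of "\<lambda>n. fls_nth F n \<noteq> 0 \<and> Q n" n "\<lambda>n. nat (n - ?s)"] assms
    by blast
  have "n0 \<le> n" if "fls_nth F n \<noteq> 0" "Q n" for n
    using least[of n] that fls_subdegree_leI[OF n0(1)] fls_subdegree_leI[OF that(1)] by simp
  with n0 show ?thesis by blast
qed

lemma fls_subst_pow_mult_of_int:
  "\<gamma> \<noteq> 0 \<Longrightarrow> fls_subst_pow F \<gamma> (\<gamma> * of_int n) = fls_nth F n"
  by (simp add: fls_subst_pow_def)

lemma fls_subst_pow_nonzeroE:
  assumes "fls_subst_pow F \<gamma> x \<noteq> 0" and "\<gamma> \<noteq> 0"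
  obtains n where "x = \<gamma> * of_int n" and "fls_nth F n \<noteq> 0"
proof -
  from assms(1) obtain n where "x / \<gamma> = of_int n" and "fls_nth F n \<noteq> 0"
    unfolding fls_subst_pow_def by (auto split: if_splits elim: Ints_cases)
  with assms(2) that show ?thesis by (simp add: field_simps)
qed

lemma poly_hahn_mult_eq_single:
  assumes "\<And>j. j \<noteq> j0 \<Longrightarrow> coeff P j * H (r - of_nat j) = 0"
  shows "poly_hahn_mult P H r = coeff P j0 * H (r - of_nat j0)"
proof (cases "j0 \<le> degree P")
  case True
  then show ?thesis
    unfolding poly_hahn_mult_def using assms
    by (subst sum.mono_neutral_left[of "{..degree P}" "{j0}", symmetric]) auto
next
  case False
  then show ?thesis
    unfolding poly_hahn_mult_def using assms coeff_eq_0[of P j0]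
    by (auto intro: sum.neutral)
qed

lemma exponent_eq_clear_denominators:
  fixes p q :: nat
  assumes "q > 0" and "i \<le> d"
    and "(of_nat p / of_nat q) ^ i * of_int n + of_nat j
         = (of_nat p / of_nat q) ^ d * of_int n0 + (of_nat j0 :: 'a::field_char_0)"
  shows "int p ^ i * int q ^ (d - i) * n + int q ^ d * int j = int p ^ d * n0 + int q ^ d * int j0"
proof -
  have scale: "of_nat q ^ d * (of_nat p / of_nat q) ^ k = of_nat p ^ k * (of_nat q ^ (d - k) :: 'a)"
    if "k \<le> d" for k
  proof -
    have "(of_nat q :: 'a) ^ d = of_nat q ^ k * of_nat q ^ (d - k)"
      using that by (simp flip: power_add)
    then show ?thesis using \<open>q > 0\<close> by (simp add: field_simps)
  qed
  have "of_nat q ^ d * ((of_nat p / of_nat q) ^ i * of_int n + of_nat j)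
        = of_nat q ^ d * ((of_nat p / of_nat q) ^ d * of_int n0 + (of_nat j0 :: 'a))"
    using assms(3) by simp
  then have "of_int (int p ^ i * int q ^ (d - i) * n + int q ^ d * int j)
             = (of_int (int p ^ d * n0 + int q ^ d * int j0) :: 'a)"
    using scale[OF \<open>i \<le> d\<close>] scale[of d] by (simp add: algebra_simps)
  then show ?thesis by (simp only: of_int_eq_iff)
qed

lemma exponent_collision:
  fixes p q n n0 j j0 :: int
  assumes "coprime p q" and "m < d" and "i \<le> d"
    and "q ^ m dvd n" and "\<not> q ^ Suc m dvd n0"
    and eq: "p ^ i * q ^ (d - i) * n + q ^ d * j = p ^ d * n0 + q ^ d * j0"
  shows "i = d" and "\<not> q ^ Suc m dvd n"
proof -
  have "\<not> q ^ Suc m dvd p ^ i * q ^ (d - i) * n"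
  proof
    assume "q ^ Suc m dvd p ^ i * q ^ (d - i) * n"
    moreover have "q ^ Suc m dvd q ^ d * (j - j0)"
      using \<open>m < d\<close> by (intro dvd_mult2 le_imp_power_dvd) simp
    moreover have "p ^ d * n0 = p ^ i * q ^ (d - i) * n + q ^ d * (j - j0)"
      using eq by (simp add: algebra_simps)
    ultimately have "q ^ Suc m dvd p ^ d * n0"
      by simp
    with \<open>coprime p q\<close> have "q ^ Suc m dvd n0"
      by (simp add: coprime_dvd_mult_right_iff coprime_commute)
    with assms(5) show False ..
  qed
  moreover have "q ^ Suc m dvd p ^ i * q ^ (d - i) * n" if "i < d"
  proof -
    have "q ^ m * q dvd n * q ^ (d - i)"
      using \<open>q ^ m dvd n\<close> that by (intro mult_dvd_mono dvd_power) auto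
    then show ?thesis by (metis dvd_mult power_Suc2 mult.commute mult.left_commute)
  qed
  ultimately show "i = d" using \<open>i \<le> d\<close> by fastforce
  with \<open>\<not> q ^ Suc m dvd p ^ i * q ^ (d - i) * n\<close> show "\<not> q ^ Suc m dvd n" by auto
qed

lemma weighted_sum_eq_imp_eq:
  fixes a b x x0 y y0 :: "'a::linordered_idom"
  assumes "a > 0" and "b > 0" and "x0 \<le> x" and "y0 \<le> y"
    and "a * x + b * y = a * x0 + b * y0"
  shows "x = x0" and "y = y0"
proof -
  have "a * (x - x0) + b * (y - y0) = 0"
    using assms(5) by (simp add: algebra_simps)
  moreover have "0 \<le> a * (x - x0)" and "0 \<le> b * (y - y0)"
    using assms(1-4) by simp_all
  ultimately have "a * (x - x0) = 0" and "b * (y - y0) = 0"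
    by linarith+
  then show "x = x0" and "y = y0"
    using assms(1,2) by simp_all
qed

lemma mahler_dominant_monomial_unique:
  fixes F :: "'a::mult_zero fls" and P :: "nat \<Rightarrow> 'a poly" and p q :: nat
  defines "\<alpha> \<equiv> of_nat p / of_nat q :: rat"
  assumes "p > 0" and "q > 0" and "coprime p q" and "m < d"
    and dvd_all: "\<And>n. fls_nth F n \<noteq> 0 \<Longrightarrow> int q ^ m dvd n"
    and n0: "\<not> int q ^ Suc m dvd n0"
    and n0_least: "\<And>n. fls_nth F n \<noteq> 0 \<Longrightarrow> \<not> int q ^ Suc m dvd n \<Longrightarrow> n0 \<le> n"
    and j0_least: "\<And>j. j < j0 \<Longrightarrow> coeff (P d) j = 0"
    and "i \<le> d"
    and nonzero: "coeff (P i) j * fls_subst_pow F (\<alpha> ^ i) (\<alpha> ^ d * of_int n0 + of_nat j0 - of_nat j) \<noteq> 0"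
  shows "i = d \<and> j = j0"
proof -
  have "\<alpha> \<noteq> 0" using \<open>p > 0\<close> \<open>q > 0\<close> by (simp add: \<alpha>_def)
  from nonzero have "coeff (P i) j \<noteq> 0"
    and "fls_subst_pow F (\<alpha> ^ i) (\<alpha> ^ d * of_int n0 + of_nat j0 - of_nat j) \<noteq> 0"
    by auto
  then obtain n where "\<alpha> ^ d * of_int n0 + of_nat j0 - of_nat j = \<alpha> ^ i * of_int n"
    and "fls_nth F n \<noteq> 0"
    using \<open>\<alpha> \<noteq> 0\<close> by (auto elim: fls_subst_pow_nonzeroE)
  then have eq: "int p ^ i * int q ^ (d - i) * n + int q ^ d * int j
                 = int p ^ d * n0 + int q ^ d * int j0"
    using \<open>q > 0\<close> \<open>i \<le> d\<close>
    by (intro exponent_eq_clear_denominators[where 'a = rat]) (simp_all add: \<alpha>_def algebra_simps)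
  then have "i = d" and "\<not> int q ^ Suc m dvd n"
    using exponent_collision[of "int p" "int q" m d i n n0 "int j" "int j0"]
      \<open>coprime p q\<close> \<open>m < d\<close> \<open>i \<le> d\<close> dvd_all[OF \<open>fls_nth F n \<noteq> 0\<close>] n0
    by auto
  moreover from this have "n0 \<le> n" and "j0 \<le> j"
    using n0_least \<open>fls_nth F n \<noteq> 0\<close> j0_least \<open>coeff (P i) j \<noteq> 0\<close> not_less by blast+
  ultimately have "int j = int j0"
    using weighted_sum_eq_imp_eq(2)[of "int p ^ d" "int q ^ d" n0 n "int j0" "int j"]
      eq \<open>p > 0\<close> \<open>q > 0\<close> by simp
  with \<open>i = d\<close> show ?thesis by simp
qed

lemma mahler_eq_nonzero_index_dvd:
  fixes F :: "'a::{comm_semiring_1,semiring_no_zero_divisors} fls" and P :: "nat \<Rightarrow> 'a poly"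
  assumes "p > 0" and "q > 0" and "coprime p q" and "P d \<noteq> 0"
    and eq: "\<And>r. (\<Sum>i\<le>d. poly_hahn_mult (P i) (fls_subst_pow F ((of_nat p / of_nat q) ^ i)) r) = 0"
    and "fls_nth F n \<noteq> 0"
  shows "int q ^ d dvd n"
proof (rule ccontr)
  assume "\<not> int q ^ d dvd n"
  then obtain m where "m < d"
    and dvd_all: "\<And>n. fls_nth F n \<noteq> 0 \<Longrightarrow> int q ^ m dvd n"
    and "\<exists>n. fls_nth F n \<noteq> 0 \<and> \<not> int q ^ Suc m dvd n"
    using ex_least_power_not_dvd[of "{n. fls_nth F n \<noteq> 0}" "int q" d] \<open>fls_nth F n \<noteq> 0\<close>
    by auto
  then obtain n0 where n0: "fls_nth F n0 \<noteq> 0" "\<not> int q ^ Suc m dvd n0"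
    and n0_least: "\<And>n. fls_nth F n \<noteq> 0 \<Longrightarrow> \<not> int q ^ Suc m dvd n \<Longrightarrow> n0 \<le> n"
    using fls_ex_least_nonzero_index[of F _ "\<lambda>n. \<not> int q ^ Suc m dvd n"] by blast
  from \<open>P d \<noteq> 0\<close> have "\<exists>j. coeff (P d) j \<noteq> 0"
    using leading_coeff_neq_0 by blast
  then obtain j0 where j0: "coeff (P d) j0 \<noteq> 0" and j0_least: "\<And>j. j < j0 \<Longrightarrow> coeff (P d) j = 0"
    by (subst (asm) exists_least_iff) blast
  define \<alpha> :: rat where "\<alpha> = of_nat p / of_nat q"
  define r where "r = \<alpha> ^ d * of_int n0 + of_nat j0"
  have single: "i = d \<and> j = j0"
    if "i \<le> d" and "coeff (P i) j * fls_subst_pow F (\<alpha> ^ i) (r - of_nat j) \<noteq> 0" for i j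
    using mahler_dominant_monomial_unique[where P = P and d = d, OF \<open>p > 0\<close> \<open>q > 0\<close> \<open>coprime p q\<close> \<open>m < d\<close>
        dvd_all n0(2) n0_least j0_least that(1)] that(2)
    by (simp add: \<alpha>_def r_def)
  have "poly_hahn_mult (P i) (fls_subst_pow F (\<alpha> ^ i)) r
        = (if i = d then coeff (P d) j0 * fls_nth F n0 else 0)" if "i \<le> d" for i
  proof -
    have "poly_hahn_mult (P i) (fls_subst_pow F (\<alpha> ^ i)) r
          = coeff (P i) j0 * fls_subst_pow F (\<alpha> ^ i) (r - of_nat j0)"
      using single \<open>i \<le> d\<close> by (intro poly_hahn_mult_eq_single) blast
    also have "\<dots> = (if i = d then coeff (P d) j0 * fls_nth F n0 else 0)"
      using single[OF \<open>i \<le> d\<close>, of j0] \<open>p > 0\<close> \<open>q > 0\<close>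
      by (auto simp: r_def \<alpha>_def fls_subst_pow_mult_of_int)
    finally show ?thesis .
  qed
  then have "(\<Sum>i\<le>d. poly_hahn_mult (P i) (fls_subst_pow F (\<alpha> ^ i)) r)
             = (\<Sum>i\<le>d. if i = d then coeff (P d) j0 * fls_nth F n0 else 0)"
    by (intro sum.cong) auto
  also have "\<dots> = coeff (P d) j0 * fls_nth F n0"
    by simp
  finally show False
    using eq[of r] j0 n0(1) by (simp add: \<alpha>_def)
qed

theorem mainTheorem4:
  fixes K :: "complex set" and p q :: nat and d :: nat
    and F :: "complex fls" and P :: "nat \<Rightarrow> complex poly"
  assumes K: "number_field K"
    and pq: "p > 0" "q > 0" "coprime p q"
    and not_int: "q \<noteq> 1"
    and not_inv: "p \<noteq> 1"
    and F_K: "\<forall>n. fls_nth F n \<in> K"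
    and P_K: "\<forall>i\<le>d. \<forall>j. coeff (P i) j \<in> K"
    and Pd: "P d \<noteq> 0"
    and eq: "(\<lambda>r. \<Sum>i\<le>d. poly_hahn_mult (P i)
                 (fls_subst_pow F ((of_nat p / of_nat q) ^ i)) r) = (\<lambda>r. 0)"
  shows "\<exists>G :: complex fls. (\<forall>n. fls_nth G n \<in> K) \<and> F = fls_compose_power G (q ^ d)"
proof -
  have "F \<in> range (\<lambda>G. fls_compose_power G (q ^ d))"
  proof (rule fls_in_range_compose_power)
    show "q ^ d > 0" using pq(2) by simp
  next
    fix n assume "fls_nth F n \<noteq> 0"
    then show "int (q ^ d) dvd n"
      using mahler_eq_nonzero_index_dvd[OF pq Pd fun_cong[OF eq]] by simp
  qed
  then obtain G where G: "F = fls_compose_power G (q ^ d)" by blast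
  have "fls_nth G n \<in> K" for n
  proof -
    have "fls_nth G n = fls_nth F (int (q ^ d) * n)"
      using pq(2) by (simp add: G fls_nth_compose_power)
    then show ?thesis using F_K by simp
  qed
  with G show ?thesis by blast
qed

end
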